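(* Let $A=K[X_1,\ldots,X_n]$ over a field $K$, let $d$ be a positive integer, let $W$ be a $K$-vector subspace of $A_d$, and let $\omega=(\omega_1,\ldots,\omega_n)\in\mathbb Z^n$ be a weight with $\omega_1\geq\cdots\geq\omega_n\geq 0$. Then for every integer $0\leq a\leq\omega_1 d$, the dimension of the homogeneous component of weight $a$ of $\operatorname{in}_\omega(W)$ equals $\operatorname{rk}^{S_a}W-\operatorname{rk}^{S_{a+1}}W$. Furthermore, if $W$ is homogeneous with respect to $\omega$ and $b\in\mathcal B$, then $\alpha_\omega(bW)\geq\alpha_\omega(W)$ (componentwise).
   Context: $A_d$ is the space of homogeneous polynomials of degree $d$. The weight of a monomial $\mathbf X^{\mathbf a}$ is $\omega\cdot\mathbf a$. For $0\leq a\leq\omega_1d+1$, $S_a$ is the set of monomials in $A_d$ of weight strictly less than $a$. For a finite set $S$ of monomials and a subspace $W$, $\operatorname{rk}^S W=\dim_K (W+\langle S\rangle)/\langle S\rangle$, where $\langle S\rangle$ is the $K$-span of $S$. Define $\alpha_\omega(W)=(\operatorname{rk}^{S_{\omega_1 d}}W,\operatorname{rk}^{S_{\omega_1 d-1}}W,\ldots,\operatorname{rk}^{S_1}W)$. The initial form $\operatorname{in}_\omega(f)$ is the sum of the terms of $f$ of maximal weight, and $\operatorname{in}_\omega(W)$ is the $K$-span of $\{\operatorname{in}_\omega(f): f\in W\}$; its homogeneous component of weight $a$ is its intersection with the span of monomials of weight $a$. $W$ is homogeneous with respect to $\omega$ if it is spanned by polynomials all of whose monomials have the same weight. $\mathcal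 B$ is the group of invertible upper-triangular $n\times n$ matrices over $K$; a matrix $b=(b_{ij})$ acts on $A$ as the linear change of coordinates $X_j\mapsto\sum_{i=1}^n b_{ij}X_i$ (so for $b\in\mathcal B$, $X_j\mapsto \sum_{i\le j}b_{ij}X_i$), and $bW$ is the image of $W$. *)

theory Defs
  imports Complex_Main "HOL-Library.Poly_Mapping"
begin

text \<open>Polynomials in K[X_0,...,X_{n-1}] (variables indexed from 0): finitely supported
  maps from exponent vectors (nat =>0 nat) to coefficients.\<close>
type_synonym 'k mpoly = "(nat \<Rightarrow>\<^sub>0 nat) \<Rightarrow>\<^sub>0 'k"

definition sc :: "'k::field \<Rightarrow> 'k mpoly \<Rightarrow> 'k mpoly" where
  "sc c p = Poly_Mapping.map (\<lambda>x. c * x) p"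

abbreviation kspan :: "'k::field mpoly set \<Rightarrow> 'k mpoly set" where
  "kspan \<equiv> Modules.module.span sc"

abbreviation kdim :: "'k::field mpoly set \<Rightarrow> nat" where
  "kdim \<equiv> Vector_Spaces.vector_space.dim sc"

abbreviation ksubspace :: "'k::field mpoly set \<Rightarrow> bool" where
  "ksubspace \<equiv> Modules.module.subspace sc"

definition in_vars :: "nat \<Rightarrow> (nat \<Rightarrow>\<^sub>0 nat) \<Rightarrow> bool" where
  "in_vars n m \<longleftrightarrow> Poly_Mapping.keys m \<subseteq> {..<n}"

definition is_mon :: "nat \<Rightarrow> nat \<Rightarrow> (nat \<Rightarrow>\<^sub>0 nat) \<Rightarrow> bool" where
  "is_mon n d m \<longleftrightarrow> in_vars n m \<and> (\<Sum>i<n. Poly_Mapping.lookup m i) = d"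

definition Ad :: "nat \<Rightarrow> nat \<Rightarrow> 'k::field mpoly set" where
  "Ad n d = {p. \<forall>m\<in>Poly_Mapping.keys p. is_mon n d m}"

definition monom :: "(nat \<Rightarrow>\<^sub>0 nat) \<Rightarrow> 'k::field mpoly" where
  "monom m = Poly_Mapping.single m 1"

definition Var :: "nat \<Rightarrow> 'k::field mpoly" where
  "Var i = monom (Poly_Mapping.single i 1)"

definition weight :: "nat \<Rightarrow> (nat \<Rightarrow> int) \<Rightarrow> (nat \<Rightarrow>\<^sub>0 nat) \<Rightarrow> int" where
  "weight n \<omega> m = (\<Sum>i<n. \<omega> i * int (Poly_Mapping.lookup m i))"

definition Sset :: "nat \<Rightarrow> nat \<Rightarrow> (nat \<Rightarrow> int) \<Rightarrow> int \<Rightarrow> 'k::field mpoly set" where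
  "Sset n d \<omega> a = {monom m | m. is_mon n d m \<and> weight n \<omega> m < a}"

text \<open>rk^S W = dim (W + <S>)/<S> = dim (W + <S>) - dim <S>.\<close>
definition rk :: "'k::field mpoly set \<Rightarrow> 'k mpoly set \<Rightarrow> nat" where
  "rk S W = kdim {w + s | w s. w \<in> W \<and> s \<in> kspan S} - kdim (kspan S)"

text \<open>alpha_omega(W) = (rk^{S_{w1 d}} W, rk^{S_{w1 d - 1}} W, ..., rk^{S_1} W), w1 = omega 0.\<close>
definition alpha :: "nat \<Rightarrow> nat \<Rightarrow> (nat \<Rightarrow> int) \<Rightarrow> 'k::field mpoly set \<Rightarrow> nat list" where
  "alpha n d \<omega> W = map (\<lambda>k. rk (Sset n d \<omega> (\<omega> 0 * int d - int k)) W) [0..<nat (\<omega> 0 * int d)]"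

definition init_form :: "nat \<Rightarrow> (nat \<Rightarrow> int) \<Rightarrow> 'k::field mpoly \<Rightarrow> 'k mpoly" where
  "init_form n \<omega> f =
     (if f = 0 then 0 else
       (let M = Max (weight n \<omega> ` Poly_Mapping.keys f)
        in (\<Sum>m\<in>Poly_Mapping.keys f. if weight n \<omega> m = M then Poly_Mapping.single m (Poly_Mapping.lookup f m) else 0)))"

definition init_space :: "nat \<Rightarrow> (nat \<Rightarrow> int) \<Rightarrow> 'k::field mpoly set \<Rightarrow> 'k mpoly set" where
  "init_space n \<omega> W = kspan (init_form n \<omega> ` W)"

definition weight_component :: "nat \<Rightarrow> (nat \<Rightarrow> int) \<Rightarrow> int \<Rightarrow> 'k::field mpoly set \<Rightarrow> 'k mpoly set" where
  "weight_component n \<omega> a V = V \<inter> kspan {monom m | m. in_vars n m \<and> weight n \<omega> m = a}"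

definition omega_homogeneous :: "nat \<Rightarrow> (nat \<Rightarrow> int) \<Rightarrow> 'k::field mpoly set \<Rightarrow> bool" where
  "omega_homogeneous n \<omega> W \<longleftrightarrow>
     (\<exists>G. kspan G = W \<and> (\<forall>g\<in>G. \<forall>m1\<in>Poly_Mapping.keys g. \<forall>m2\<in>Poly_Mapping.keys g. weight n \<omega> m1 = weight n \<omega> m2))"

definition upper_tri_invertible :: "nat \<Rightarrow> (nat \<Rightarrow> nat \<Rightarrow> 'k::field) \<Rightarrow> bool" where
  "upper_tri_invertible n b \<longleftrightarrow>
     (\<forall>i<n. \<forall>j<n. j < i \<longrightarrow> b i j = 0) \<and>
     (\<exists>c. \<forall>i<n. \<forall>j<n.
        (\<Sum>k<n. b i k * c k j) = (if i = j then 1 else 0) \<and>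
        (\<Sum>k<n. c i k * b k j) = (if i = j then 1 else 0))"

definition act :: "nat \<Rightarrow> (nat \<Rightarrow> nat \<Rightarrow> 'k::field) \<Rightarrow> 'k mpoly \<Rightarrow> 'k mpoly" where
  "act n b f = (\<Sum>m\<in>Poly_Mapping.keys f. sc (Poly_Mapping.lookup f m)
       (\<Prod>j<n. (\<Sum>i<n. sc (b i j) (Var i)) ^ Poly_Mapping.lookup m j))"

end

theory Submission
  imports Defs
begin

text \<open>Write \<open>P\<^sub>a f\<close> (\<open>part_ge\<close> below) for the part of \<open>f\<close> supported on monomials of
  weight \<open>\<ge> a\<close>. On \<open>A\<^sub>d\<close> the span of \<open>S\<^sub>a\<close> is exactly the kernel of \<open>P\<^sub>a\<close>, so \<open>rk\<close> with respect to
  \<open>S\<^sub>a\<close> is \<open>dim P\<^sub>a W\<close>. The weight-\<open>a\<close> component of \<open>in\<^sub>\<omega> W\<close> consists of the \<open>P\<^sub>a w\<close>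
  with \<open>w \<in> W\<close> and \<open>P\<^bsub>a+1\<^esub> w = 0\<close>: such a nonzero \<open>P\<^sub>a w\<close> is the initial form of \<open>w\<close>, and
  conversely the weight-\<open>a\<close> slice of an initial form \<open>in\<^sub>\<omega> w\<close> is \<open>0\<close> or \<open>P\<^sub>a w\<close>. So that
  component is the kernel of \<open>P\<^bsub>a+1\<^esub>\<close> on \<open>P\<^sub>a W\<close>, and rank--nullity gives the first claim.

  If \<open>W\<close> is \<open>\<omega>\<close>-homogeneous then \<open>P\<^sub>a W = W \<inter> F\<^sub>a\<close>, where \<open>F\<^sub>a\<close> (\<open>weight_ge_space\<close>)
  is spanned by the monomials of weight \<open>\<ge> a\<close>. An upper-triangular substitution sends \<open>X\<^sub>j\<close> to a combination
  of the \<open>X\<^sub>i\<close> with \<open>i \<le> j\<close>, of weight \<open>\<omega>\<^sub>i \<ge> \<omega>\<^sub>j\<close>, so it maps \<open>F\<^sub>a\<close> into itself;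
  being injective, it embeds \<open>W \<inter> F\<^sub>a\<close> into \<open>bW \<inter> F\<^sub>a \<subseteq> P\<^sub>a (bW)\<close>.\<close>

section \<open>Rank--nullity inside a finitely generated span\<close>

context vector_space
begin

lemma obtain_finite_basis_in_finite_span:
  assumes "finite T" "U \<subseteq> span T"
  obtains B where "B \<subseteq> U" "independent B" "U \<subseteq> span B" "card B = dim U" "finite B"
proof -
  obtain B where B: "B \<subseteq> U" "independent B" "U \<subseteq> span B" "card B = dim U"
    by (rule basis_exists)
  then have "finite B" using independent_span_bound[OF assms(1) B(2)] assms(2) by blast
  with B that show ?thesis by blast
qed

lemma dim_mono_in_finite_span:
  assumes "finite T" "U \<subseteq> span T" "V \<subseteq> U"
  shows "dim V \<le> dim U"
proof -
  obtain B where "B \<subseteq> U" "independent B" "U \<subseteq> span B" "card B = dim U" "finite B"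
    using obtain_finite_basis_in_finite_span[OF assms(1,2)] .
  with dim_le_card[of V B] assms(3) show ?thesis by auto
qed

text \<open>The library's rank--nullity theorem needs a finite-dimensional ambient space; here it
  suffices that the domain lies in a finitely generated span.\<close>

lemma dim_image_add_dim_kernel_le:
  assumes f: "module_hom scale scale f" and U: "subspace U"
    and T: "finite T" "U \<subseteq> span T"
  shows "dim (f ` U) + dim (U \<inter> {x. f x = 0}) \<le> dim U"
proof -
  interpret f: module_hom scale scale f by fact
  define K where "K = U \<inter> {x. f x = 0}"
  obtain B0 where B0: "B0 \<subseteq> K" "independent B0" "K \<subseteq> span B0"
    by (rule maximal_independent_subset)
  then obtain B where B: "B0 \<subseteq> B" "B \<subseteq> U" "independent B" "U \<subseteq> span B"
    using maximal_independent_subset_extend[of B0 U] K_def by auto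
  have finB: "finite B" using independent_span_bound[OF T(1) B(3)] B(2) T(2) by blast
  have finB0: "finite B0" using finB B(1) finite_subset by blast
  have "card B = dim U" and "card B0 = dim K"
    using basis_card_eq_dim B B0 by blast+
  moreover have "span B = U" using B span_minimal[OF B(2) U] by blast
  moreover have "f ` B \<subseteq> insert 0 (f ` (B - B0))"
    using B0(1) unfolding K_def by auto
  then have "span (f ` B) \<subseteq> span (f ` (B - B0))"
    using span_mono span_insert_0 by metis
  ultimately have "f ` U \<subseteq> span (f ` (B - B0))"
    using f.span_image by simp
  then have "dim (f ` U) \<le> card (f ` (B - B0))"
    using dim_le_card finB by blast
  also have "\<dots> \<le> card (B - B0)" using finB card_image_le by blast
  finally show ?thesis
    using \<open>card B = dim U\<close> \<open>card B0 = dim K\<close> card_Diff_subset[OF finB0 B(1)]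
      card_mono[OF finB B(1)] unfolding K_def by linarith
qed

lemma dim_le_dim_image_add_dim_kernel:
  assumes f: "module_hom scale scale f" and U: "subspace U"
    and T: "finite T" "U \<subseteq> span T"
  shows "dim U \<le> dim (f ` U) + dim (U \<inter> {x. f x = 0})"
proof -
  interpret f: module_hom scale scale f by fact
  define K where "K = U \<inter> {x. f x = 0}"
  have K: "subspace K" unfolding K_def by (intro subspace_inter U f.subspace_kernel)
  obtain B0 where B0: "B0 \<subseteq> K" "independent B0" "K \<subseteq> span B0" "card B0 = dim K" "finite B0"
    using obtain_finite_basis_in_finite_span[OF T(1), of K] T(2) K_def span_superset
    by (metis Int_lower1 order_trans)
  have "f ` U \<subseteq> span (f ` T)" using T(2) f.span_image by blast
  then obtain D where D: "D \<subseteq> f ` U" "f ` U \<subseteq> span D" "card D = dim (f ` U)" "finite D"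
    by (metis obtain_finite_basis_in_finite_span T(1) finite_imageI)
  \<comment> \<open>Preimages of a basis of the image, together with a basis of the kernel, span \<open>U\<close>.\<close>
  define E where "E = inv_into U f ` D"
  have EU: "E \<subseteq> U" using D(1) E_def by (auto intro: inv_into_into)
  have fE: "f ` E = D" unfolding E_def by (rule image_inv_into_cancel[OF refl D(1)])
  have cE: "card E \<le> card D" and finE: "finite E" using E_def card_image_le D(4) by auto
  have "U \<subseteq> span (E \<union> B0)"
  proof
    fix u assume u: "u \<in> U"
    then have "f u \<in> span (f ` E)" using D(2) fE by auto
    then obtain v where v: "v \<in> span E" "f v = f u" using f.span_image by auto
    have "v \<in> U" using v(1) span_minimal[OF EU U] by auto
    then have "u - v \<in> K" using u v(2) K_def subspace_diff[OF U] f.diff by auto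
    then have "(u - v) + v \<in> span (E \<union> B0)"
      using B0(3) v(1) span_mono[of B0 "E \<union> B0"] span_mono[of E "E \<union> B0"]
      by (intro span_add) auto
    then show "u \<in> span (E \<union> B0)" by simp
  qed
  then have "dim U \<le> card (E \<union> B0)" using dim_le_card finE B0(5) by blast
  also have "\<dots> \<le> card E + card B0" by (rule card_Un_le)
  finally show ?thesis using cE D(3) B0(4) unfolding K_def by linarith
qed

lemma dim_image_add_dim_kernel:
  assumes "module_hom scale scale f" "subspace U" "finite T" "U \<subseteq> span T"
  shows "dim U = dim (f ` U) + dim (U \<inter> {x. f x = 0})"
  using dim_image_add_dim_kernel_le[OF assms] dim_le_dim_image_add_dim_kernel[OF assms] by linarith

lemma dim_image_eq_if_kernel_trivial:
  assumes f: "module_hom scale scale f" and U: "subspace U"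
    and T: "finite T" "U \<subseteq> span T" and ker: "\<And>x. x \<in> U \<Longrightarrow> f x = 0 \<Longrightarrow> x = 0"
  shows "dim (f ` U) = dim U"
proof -
  have "U \<inter> {x. f x = 0} = span {}"
    using ker subspace_0[OF U] module_hom.zero[OF f] by auto
  then have "dim (U \<inter> {x. f x = 0}) = 0"
    using dim_span[of "{}"] dim_eq_card_independent[OF independent_empty] by simp
  then show ?thesis using dim_image_add_dim_kernel[OF f U T] by simp
qed

end

section \<open>Polynomials as a vector space\<close>

lemma sc_eq_single_mult: "sc c p = Poly_Mapping.single 0 c * p"
  unfolding sc_def by (rule mult_map_scale_conv_mult)

interpretation kvs: vector_space "sc :: 'k::field \<Rightarrow> 'k mpoly \<Rightarrow> 'k mpoly"
  by unfold_locales
    (simp_all add: sc_eq_single_mult algebra_simps single_add mult_single flip: mult.assoc)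

lemma module_hom_scI:
  fixes f :: "'k::field mpoly \<Rightarrow> 'k mpoly"
  assumes "\<And>x y. f (x + y) = f x + f y" "\<And>c x. f (sc c x) = sc c (f x)"
  shows "module_hom sc sc f"
  using assms kvs.vector_space_axioms by (simp add: module_hom_iff module_iff_vector_space)

lemma lookup_sc [simp]: "Poly_Mapping.lookup (sc c p) m = c * Poly_Mapping.lookup p m"
  unfolding sc_def by transfer (simp add: when_def)

lemma keys_sc_subset: "Poly_Mapping.keys (sc c p) \<subseteq> Poly_Mapping.keys p"
  by (auto simp: in_keys_iff)

lemma sc_mult_sc: "sc c p * sc c' q = sc (c * c') (p * q)"
  by (simp add: sc_eq_single_mult mult_single algebra_simps)

lemma lookup_monom: "Poly_Mapping.lookup (monom m :: 'k::field mpoly) k = (if k = m then 1 else 0)"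
  unfolding monom_def by (simp add: lookup_single)

lemma keys_monom [simp]: "Poly_Mapping.keys (monom m :: 'k::field mpoly) = {m}"
  unfolding monom_def by simp

lemma monom_mult: "monom m * monom m' = (monom (m + m') :: 'k::field mpoly)"
  unfolding monom_def by (simp add: mult_single)

lemma sum_monoms_eq:
  "(\<Sum>m\<in>Poly_Mapping.keys f. sc (Poly_Mapping.lookup f m) (monom m)) = (f :: 'k::field mpoly)"
proof (rule poly_mapping_eqI)
  fix k
  have "(\<Sum>m\<in>Poly_Mapping.keys f. Poly_Mapping.lookup f m * (if k = m then 1 else 0))
       = (\<Sum>m\<in>Poly_Mapping.keys f. if m = k then Poly_Mapping.lookup f k else 0)"
    by (rule sum.cong) auto
  also have "\<dots> = Poly_Mapping.lookup f k" by (simp add: in_keys_iff)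
  finally show "Poly_Mapping.lookup (\<Sum>m\<in>Poly_Mapping.keys f. sc (Poly_Mapping.lookup f m) (monom m)) k
      = Poly_Mapping.lookup f k"
    by (simp add: lookup_sum lookup_monom)
qed

lemma subspace_keys_in: "ksubspace {f :: 'k::field mpoly. \<forall>m\<in>Poly_Mapping.keys f. R m}"
  unfolding kvs.subspace_def
  using keys_add keys_sc_subset by (fastforce simp: subset_iff)

lemma span_monoms_eq: "kspan {monom m :: 'k::field mpoly | m. R m} = {f. \<forall>m\<in>Poly_Mapping.keys f. R m}"
proof
  show "kspan {monom m :: 'k mpoly | m. R m} \<subseteq> {f. \<forall>m\<in>Poly_Mapping.keys f. R m}"
    by (intro kvs.span_minimal subspace_keys_in) auto
  show "{f. \<forall>m\<in>Poly_Mapping.keys f. R m} \<subseteq> kspan {monom m :: 'k mpoly | m. R m}"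
  proof
    fix f :: "'k mpoly" assume "f \<in> {f. \<forall>m\<in>Poly_Mapping.keys f. R m}"
    then have "(\<Sum>m\<in>Poly_Mapping.keys f. sc (Poly_Mapping.lookup f m) (monom m))
        \<in> kspan {monom m :: 'k mpoly | m. R m}"
      by (intro kvs.span_sum kvs.span_scale kvs.span_base) auto
    then show "f \<in> kspan {monom m :: 'k mpoly | m. R m}" by (simp only: sum_monoms_eq)
  qed
qed

definition restrict_keys :: "((nat \<Rightarrow>\<^sub>0 nat) \<Rightarrow> bool) \<Rightarrow> 'k::field mpoly \<Rightarrow> 'k mpoly" where
  "restrict_keys P f = Abs_poly_mapping (\<lambda>m. if P m then Poly_Mapping.lookup f m else 0)"

lemma lookup_restrict_keys [simp]:
  "Poly_Mapping.lookup (restrict_keys P f) m = (if P m then Poly_Mapping.lookup f m else 0)"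
proof -
  have "{m. (if P m then Poly_Mapping.lookup f m else 0) \<noteq> 0} \<subseteq> Poly_Mapping.keys f"
    by (simp add: subset_iff in_keys_iff)
  then have "finite {m. (if P m then Poly_Mapping.lookup f m else 0) \<noteq> 0}"
    by (rule finite_subset) simp
  then show ?thesis by (simp only: restrict_keys_def lookup_Abs_poly_mapping)
qed

lemma keys_restrict_keys: "Poly_Mapping.keys (restrict_keys P f) = {m \<in> Poly_Mapping.keys f. P m}"
  by (simp add: set_eq_iff in_keys_iff)

lemma module_hom_restrict_keys: "module_hom sc sc (restrict_keys P :: 'k::field mpoly \<Rightarrow> _)"
  by (rule module_hom_scI; rule poly_mapping_eqI; simp add: lookup_add)

lemma restrict_keys_restrict_keys:
  "restrict_keys P (restrict_keys Q f) = restrict_keys (\<lambda>m. P m \<and> Q m) f"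
  by (rule poly_mapping_eqI) simp

lemma restrict_keys_cong:
  "(\<And>m. m \<in> Poly_Mapping.keys f \<Longrightarrow> P m \<longleftrightarrow> Q m) \<Longrightarrow> restrict_keys P f = restrict_keys Q f"
  by (rule poly_mapping_eqI) (auto simp: in_keys_iff)

lemma restrict_keys_id: "(\<And>m. m \<in> Poly_Mapping.keys f \<Longrightarrow> P m) \<Longrightarrow> restrict_keys P f = f"
  by (rule poly_mapping_eqI) (auto simp: in_keys_iff)

lemma restrict_keys_eq_0_iff:
  "restrict_keys P f = 0 \<longleftrightarrow> (\<forall>m\<in>Poly_Mapping.keys f. \<not> P m)"
  unfolding keys_eq_empty[symmetric] keys_restrict_keys by blast

lemma finite_is_mon: "finite {m. is_mon n d m}"
proof -
  let ?S = "{g. \<forall>i. (i \<in> {..<n} \<longrightarrow> g i \<in> {0..d}) \<and> (i \<notin> {..<n} \<longrightarrow> g i = (0::nat))}"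
  have "Poly_Mapping.lookup ` {m. is_mon n d m} \<subseteq> ?S"
  proof
    fix g assume "g \<in> Poly_Mapping.lookup ` {m. is_mon n d m}"
    then obtain m where m: "is_mon n d m" and g: "g = Poly_Mapping.lookup m" by auto
    have "Poly_Mapping.lookup m i \<le> d" if "i < n" for i
      using m member_le_sum[of i "{..<n}" "Poly_Mapping.lookup m"] that
      unfolding is_mon_def by simp
    moreover have "Poly_Mapping.lookup m i = 0" if "\<not> i < n" for i
      using m that unfolding is_mon_def in_vars_def by (auto simp: in_keys_iff)
    ultimately show "g \<in> ?S" using g by auto
  qed
  moreover have "finite ?S"
    by (rule finite_set_of_finite_funs) simp_all
  moreover have "inj_on Poly_Mapping.lookup {m. is_mon n d m}"
    by (rule inj_onI, rule poly_mapping_eqI) simp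
  ultimately show ?thesis by (meson finite_imageD finite_subset)
qed

definition mon_basis :: "nat \<Rightarrow> nat \<Rightarrow> 'k::field mpoly set" where
  "mon_basis n d = {monom m | m. is_mon n d m}"

lemma finite_mon_basis: "finite (mon_basis n d)"
  unfolding mon_basis_def using finite_image_set[OF finite_is_mon] .

lemma Ad_eq_span_mon_basis: "Ad n d = kspan (mon_basis n d)"
  unfolding mon_basis_def span_monoms_eq Ad_def by simp

lemma subspace_Ad: "ksubspace (Ad n d)"
  unfolding Ad_eq_span_mon_basis by simp

lemma Ad_in_vars: "f \<in> Ad n d \<Longrightarrow> m \<in> Poly_Mapping.keys f \<Longrightarrow> in_vars n m"
  unfolding Ad_def is_mon_def by blast

lemma dim_image_add_dim_kernel_Ad:
  assumes "module_hom sc sc f" "ksubspace U" "U \<subseteq> Ad n d"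
  shows "kdim U = kdim (f ` U) + kdim (U \<inter> {x. f x = (0 :: 'k::field mpoly)})"
  using kvs.dim_image_add_dim_kernel[OF assms(1,2) finite_mon_basis] assms(3)
  by (simp add: Ad_eq_span_mon_basis)

section \<open>Truncation by weight and initial forms\<close>

definition part_ge :: "nat \<Rightarrow> (nat \<Rightarrow> int) \<Rightarrow> int \<Rightarrow> 'k::field mpoly \<Rightarrow> 'k mpoly" where
  "part_ge n \<omega> a = restrict_keys (\<lambda>m. a \<le> weight n \<omega> m)"

lemma keys_part_ge: "Poly_Mapping.keys (part_ge n \<omega> a f) = {m \<in> Poly_Mapping.keys f. a \<le> weight n \<omega> m}"
  unfolding part_ge_def by (rule keys_restrict_keys)

lemma part_ge_eq_0_iff: "part_ge n \<omega> a f = 0 \<longleftrightarrow> (\<forall>m\<in>Poly_Mapping.keys f. weight n \<omega> m < a)"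
  unfolding part_ge_def restrict_keys_eq_0_iff by auto

lemma part_ge_part_ge: "a \<le> b \<Longrightarrow> part_ge n \<omega> b (part_ge n \<omega> a f) = part_ge n \<omega> b f"
  unfolding part_ge_def restrict_keys_restrict_keys by (rule restrict_keys_cong) auto

lemma module_hom_part_ge: "module_hom sc sc (part_ge n \<omega> a :: 'k::field mpoly \<Rightarrow> _)"
  unfolding part_ge_def by (rule module_hom_restrict_keys)

lemma part_ge_Ad: "f \<in> Ad n d \<Longrightarrow> part_ge n \<omega> a f \<in> Ad n d"
  unfolding Ad_def by (auto simp: keys_part_ge)

lemma rk_Sset_eq_dim_part_ge:
  fixes W :: "'k::field mpoly set"
  assumes W: "ksubspace W" "W \<subseteq> Ad n d"
  shows "rk (Sset n d \<omega> a) W = kdim (part_ge n \<omega> a ` W)"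
proof -
  define L :: "'k mpoly set" where "L = kspan (Sset n d \<omega> a)"
  have L: "L = {f. \<forall>m\<in>Poly_Mapping.keys f. is_mon n d m \<and> weight n \<omega> m < a}"
    unfolding L_def Sset_def span_monoms_eq by simp
  define X where "X = {w + s | w s. w \<in> W \<and> s \<in> L}"
  have X: "ksubspace X" unfolding X_def L_def
    by (rule kvs.subspace_sums[OF W(1)]) simp
  have "L \<subseteq> Ad n d" unfolding L Ad_def by auto
  then have XAd: "X \<subseteq> Ad n d" unfolding X_def using W(2)
    by (auto intro: kvs.subspace_add[OF subspace_Ad])
  have L_kernel: "part_ge n \<omega> a s = 0" if "s \<in> L" for s
    using that unfolding L part_ge_eq_0_iff by auto
  have "W \<subseteq> X" unfolding X_def L_def using kvs.span_zero by force
  then have image: "part_ge n \<omega> a ` X = part_ge n \<omega> a ` W"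
    unfolding X_def using L_kernel by (force simp: module_hom.add[OF module_hom_part_ge])
  have kernel: "X \<inter> {x. part_ge n \<omega> a x = 0} = L"
  proof
    show "X \<inter> {x. part_ge n \<omega> a x = 0} \<subseteq> L"
    proof
      fix x assume x: "x \<in> X \<inter> {x. part_ge n \<omega> a x = 0}"
      then obtain w s where ws: "x = w + s" "w \<in> W" "s \<in> L" unfolding X_def by blast
      then have "part_ge n \<omega> a w = 0"
        using x L_kernel by (simp add: module_hom.add[OF module_hom_part_ge])
      then have "w \<in> L" using ws(2) W(2) unfolding L part_ge_eq_0_iff Ad_def by auto
      then show "x \<in> L" using ws unfolding L_def by (simp add: kvs.span_add)
    qed
    show "L \<subseteq> X \<inter> {x. part_ge n \<omega> a x = 0}"
      unfolding X_def using L_kernel kvs.subspace_0[OF W(1)] by force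
  qed
  have "kdim X = kdim (part_ge n \<omega> a ` W) + kdim L"
    using dim_image_add_dim_kernel_Ad[OF module_hom_part_ge[of n \<omega> a] X XAd] image kernel by simp
  then show ?thesis
    unfolding rk_def L_def[symmetric] X_def[symmetric] by simp
qed

definition max_weight :: "nat \<Rightarrow> (nat \<Rightarrow> int) \<Rightarrow> 'k::field mpoly \<Rightarrow> int" where
  "max_weight n \<omega> f = Max (weight n \<omega> ` Poly_Mapping.keys f)"

lemma weight_le_max_weight: "m \<in> Poly_Mapping.keys f \<Longrightarrow> weight n \<omega> m \<le> max_weight n \<omega> f"
  unfolding max_weight_def by simp

lemma max_weight_attained:
  assumes "f \<noteq> 0"
  obtains m where "m \<in> Poly_Mapping.keys f" "weight n \<omega> m = max_weight n \<omega> f"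
proof -
  have "max_weight n \<omega> f \<in> weight n \<omega> ` Poly_Mapping.keys f"
    unfolding max_weight_def by (rule Max_in) (use assms in auto)
  with that show ?thesis by auto
qed

lemma init_form_eq_restrict_keys:
  "init_form n \<omega> f = restrict_keys (\<lambda>m. weight n \<omega> m = max_weight n \<omega> f) f"
proof (rule poly_mapping_eqI)
  fix k
  show "Poly_Mapping.lookup (init_form n \<omega> f) k
      = Poly_Mapping.lookup (restrict_keys (\<lambda>m. weight n \<omega> m = max_weight n \<omega> f) f) k"
  proof (cases "f = 0")
    case False
    have "Poly_Mapping.lookup (init_form n \<omega> f) k
        = (\<Sum>m\<in>Poly_Mapping.keys f. if m = k \<and> weight n \<omega> k = max_weight n \<omega> f
            then Poly_Mapping.lookup f k else 0)"
      unfolding init_form_def Let_def max_weight_def using False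
      by (simp add: lookup_sum) (rule sum.cong; auto simp: lookup_single when_def)
    also have "\<dots> = Poly_Mapping.lookup (restrict_keys (\<lambda>m. weight n \<omega> m = max_weight n \<omega> f) f) k"
      by (cases "k \<in> Poly_Mapping.keys f") (simp_all add: sum.If_cases in_keys_iff)
    finally show ?thesis .
  qed (simp add: init_form_def)
qed

lemma weight_slice_init_form:
  "restrict_keys (\<lambda>m. weight n \<omega> m = a) (init_form n \<omega> f)
     = (if max_weight n \<omega> f = a then part_ge n \<omega> a f else 0)"
proof (cases "max_weight n \<omega> f = a")
  case True
  have "restrict_keys (\<lambda>m. weight n \<omega> m = max_weight n \<omega> f) f
      = restrict_keys (\<lambda>m. max_weight n \<omega> f \<le> weight n \<omega> m) f"
    by (rule restrict_keys_cong) (use weight_le_max_weight[of _ f n \<omega>] in force)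
  with True show ?thesis
    unfolding init_form_eq_restrict_keys restrict_keys_restrict_keys part_ge_def by simp
qed (auto simp: init_form_eq_restrict_keys restrict_keys_restrict_keys restrict_keys_eq_0_iff)

lemma init_form_eq_part_ge:
  assumes "part_ge n \<omega> (a + 1) f = 0" "part_ge n \<omega> a f \<noteq> 0"
  shows "init_form n \<omega> f = part_ge n \<omega> a f"
proof -
  have below: "weight n \<omega> m \<le> a" if "m \<in> Poly_Mapping.keys f" for m
    using assms(1) that unfolding part_ge_eq_0_iff by fastforce
  obtain m0 where "m0 \<in> Poly_Mapping.keys f" "a \<le> weight n \<omega> m0"
    using assms(2) unfolding part_ge_eq_0_iff by auto
  moreover obtain m1 where "m1 \<in> Poly_Mapping.keys f" "weight n \<omega> m1 = max_weight n \<omega> f"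
    using max_weight_attained assms(2) by (metis part_ge_eq_0_iff keys_eq_empty empty_iff)
  ultimately have "max_weight n \<omega> f = a"
    using below weight_le_max_weight by (metis antisym order_trans)
  then show ?thesis
    unfolding init_form_eq_restrict_keys part_ge_def
    by (rule_tac restrict_keys_cong) (use below in fastforce)
qed

lemma part_ge_kernel_subset_weight_component:
  assumes W: "W \<subseteq> Ad n d"
  shows "part_ge n \<omega> a ` W \<inter> {x. part_ge n \<omega> (a + 1) x = 0}
           \<subseteq> weight_component n \<omega> a (init_space n \<omega> W)"
proof
  fix x assume "x \<in> part_ge n \<omega> a ` W \<inter> {x. part_ge n \<omega> (a + 1) x = 0}"
  then obtain w where w: "w \<in> W" "x = part_ge n \<omega> a w" "part_ge n \<omega> (a + 1) w = 0"
    by (auto simp: part_ge_part_ge)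
  have "x \<in> init_space n \<omega> W"
  proof (cases "x = 0")
    case True
    then show ?thesis unfolding init_space_def by (simp add: kvs.span_zero)
  next
    case False
    then have "init_form n \<omega> w = x" using init_form_eq_part_ge w(2,3) by blast
    then show ?thesis unfolding init_space_def using w(1) by (auto intro: kvs.span_base)
  qed
  moreover have "\<forall>m\<in>Poly_Mapping.keys x. in_vars n m \<and> weight n \<omega> m = a"
  proof
    fix m assume "m \<in> Poly_Mapping.keys x"
    then have m: "m \<in> Poly_Mapping.keys w" "a \<le> weight n \<omega> m"
      unfolding w(2) keys_part_ge by auto
    moreover have "weight n \<omega> m < a + 1" using w(3) m(1) unfolding part_ge_eq_0_iff by blast
    ultimately show "in_vars n m \<and> weight n \<omega> m = a" using Ad_in_vars w(1) W by fastforce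
  qed
  ultimately show "x \<in> weight_component n \<omega> a (init_space n \<omega> W)"
    unfolding weight_component_def span_monoms_eq by blast
qed

lemma weight_component_subset_part_ge_kernel:
  assumes W: "ksubspace W"
  shows "weight_component n \<omega> a (init_space n \<omega> W)
           \<subseteq> part_ge n \<omega> a ` W \<inter> {x. part_ge n \<omega> (a + 1) x = 0}"
proof
  define D where "D = part_ge n \<omega> a ` W \<inter> {x. part_ge n \<omega> (a + 1) x = 0}"
  define slice :: "'a mpoly \<Rightarrow> 'a mpoly" where "slice = restrict_keys (\<lambda>m. weight n \<omega> m = a)"
  interpret slice: module_hom sc sc slice
    unfolding slice_def by (rule module_hom_restrict_keys)
  have D: "ksubspace D" unfolding D_def
    by (intro kvs.subspace_inter module_hom.subspace_image[OF module_hom_part_ge W]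
        module_hom.subspace_kernel[OF module_hom_part_ge])
  have "slice (init_form n \<omega> w) \<in> D" if "w \<in> W" for w
  proof (cases "max_weight n \<omega> w = a")
    case True
    then have "part_ge n \<omega> (a + 1) w = 0"
      using weight_le_max_weight[of _ w n \<omega>] unfolding part_ge_eq_0_iff by fastforce
    then show ?thesis
      using True that part_ge_part_ge[of a "a + 1" n \<omega> w]
      unfolding slice_def weight_slice_init_form D_def by auto
  qed (use kvs.subspace_0[OF D] in \<open>simp add: slice_def weight_slice_init_form\<close>)
  then have "slice ` init_space n \<omega> W \<subseteq> D"
    unfolding init_space_def slice.span_image[symmetric] by (intro kvs.span_minimal D) auto
  moreover fix x assume x: "x \<in> weight_component n \<omega> a (init_space n \<omega> W)"
  then have "slice x = x"
    unfolding slice_def weight_component_def span_monoms_eq by (auto intro: restrict_keys_id)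
  ultimately show "x \<in> D" using x unfolding weight_component_def D_def by force
qed

lemma dim_weight_component_init_space:
  assumes W: "ksubspace W" "W \<subseteq> Ad n d"
  shows "kdim (weight_component n \<omega> a (init_space n \<omega> W)) + kdim (part_ge n \<omega> (a + 1) ` W)
           = kdim (part_ge n \<omega> a ` W)"
proof -
  let ?U = "part_ge n \<omega> a ` W"
  have "ksubspace ?U" by (rule module_hom.subspace_image[OF module_hom_part_ge W(1)])
  moreover have "?U \<subseteq> Ad n d" using W(2) part_ge_Ad by blast
  ultimately have "kdim ?U = kdim (part_ge n \<omega> (a + 1) ` ?U)
      + kdim (?U \<inter> {x. part_ge n \<omega> (a + 1) x = 0})"
    by (rule dim_image_add_dim_kernel_Ad[OF module_hom_part_ge])
  moreover have "part_ge n \<omega> (a + 1) ` ?U = part_ge n \<omega> (a + 1) ` W"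
    unfolding image_image by (simp add: part_ge_part_ge)
  moreover have "weight_component n \<omega> a (init_space n \<omega> W) = ?U \<inter> {x. part_ge n \<omega> (a + 1) x = 0}"
    using part_ge_kernel_subset_weight_component[OF W(2)]
      weight_component_subset_part_ge_kernel[OF W(1)] by blast
  ultimately show ?thesis by simp
qed

section \<open>Linear substitutions\<close>

definition lin_form :: "nat \<Rightarrow> (nat \<Rightarrow> nat \<Rightarrow> 'k::field) \<Rightarrow> nat \<Rightarrow> 'k mpoly" where
  "lin_form n b j = (\<Sum>i<n. sc (b i j) (Var i))"

definition subst_monom :: "nat \<Rightarrow> (nat \<Rightarrow> nat \<Rightarrow> 'k::field) \<Rightarrow> (nat \<Rightarrow>\<^sub>0 nat) \<Rightarrow> 'k mpoly" where
  "subst_monom n b m = (\<Prod>j<n. lin_form n b j ^ Poly_Mapping.lookup m j)"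

lemma act_eq_sum_subst_monom:
  "act n b f = (\<Sum>m\<in>Poly_Mapping.keys f. sc (Poly_Mapping.lookup f m) (subst_monom n b m))"
  unfolding act_def subst_monom_def lin_form_def ..

lemma act_eq_sum_over_superset:
  assumes "finite S" "Poly_Mapping.keys f \<subseteq> S"
  shows "act n b f = (\<Sum>m\<in>S. sc (Poly_Mapping.lookup f m) (subst_monom n b m))"
  unfolding act_eq_sum_subst_monom
  by (rule sum.mono_neutral_left) (use assms in \<open>auto simp: in_keys_iff\<close>)

lemma act_add: "act n b (f + g) = act n b f + act n b g"
proof -
  let ?S = "Poly_Mapping.keys f \<union> Poly_Mapping.keys g"
  have "act n b (f + g) = (\<Sum>m\<in>?S. sc (Poly_Mapping.lookup (f + g) m) (subst_monom n b m))"
    by (rule act_eq_sum_over_superset) (use keys_add[of f g] in auto)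
  also have "\<dots> = (\<Sum>m\<in>?S. sc (Poly_Mapping.lookup f m) (subst_monom n b m))
      + (\<Sum>m\<in>?S. sc (Poly_Mapping.lookup g m) (subst_monom n b m))"
    by (simp add: lookup_add kvs.scale_left_distrib sum.distrib)
  also have "\<dots> = act n b f + act n b g"
    by (subst (1 2) act_eq_sum_over_superset[of ?S]) auto
  finally show ?thesis .
qed

lemma act_sc: "act n b (sc c f) = sc c (act n b f)"
proof -
  have "act n b (sc c f) = (\<Sum>m\<in>Poly_Mapping.keys f. sc (Poly_Mapping.lookup (sc c f) m) (subst_monom n b m))"
    by (rule act_eq_sum_over_superset) (use keys_sc_subset in auto)
  also have "\<dots> = sc c (act n b f)"
    unfolding act_eq_sum_subst_monom kvs.scale_sum_right by (simp add: kvs.scale_scale)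
  finally show ?thesis .
qed

lemma module_hom_act: "module_hom sc sc (act n b :: 'k::field mpoly \<Rightarrow> _)"
  by (rule module_hom_scI) (simp_all add: act_add act_sc)

lemma act_sc_monom: "act n b (sc c (monom m)) = sc c (subst_monom n b m)"
proof -
  have "act n b (sc c (monom m)) = (\<Sum>m'\<in>{m}. sc (Poly_Mapping.lookup (sc c (monom m)) m') (subst_monom n b m'))"
    by (rule act_eq_sum_over_superset) (use keys_sc_subset[of c "monom m"] in auto)
  then show ?thesis by (simp add: lookup_monom)
qed

lemma subst_monom_add: "subst_monom n b (m + m') = subst_monom n b m * subst_monom n b m'"
  unfolding subst_monom_def by (simp add: lookup_add power_add prod.distrib)

lemma act_mult: "act n b (f * g) = act n b f * act n b (g :: 'k::field mpoly)"
proof -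
  interpret act: module_hom sc sc "act n b :: 'k mpoly \<Rightarrow> _" by (rule module_hom_act)
  let ?F = "Poly_Mapping.keys f" and ?G = "Poly_Mapping.keys g"
  have "f * g = (\<Sum>m\<in>?F. sc (Poly_Mapping.lookup f m) (monom m)) * (\<Sum>m\<in>?G. sc (Poly_Mapping.lookup g m) (monom m))"
    by (simp only: sum_monoms_eq)
  also have "\<dots> = (\<Sum>m\<in>?F. \<Sum>m'\<in>?G. sc (Poly_Mapping.lookup f m * Poly_Mapping.lookup g m') (monom (m + m')))"
    by (simp add: sum_product sc_mult_sc monom_mult)
  finally have "act n b (f * g) = (\<Sum>m\<in>?F. \<Sum>m'\<in>?G.
      sc (Poly_Mapping.lookup f m * Poly_Mapping.lookup g m') (subst_monom n b (m + m')))"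
    by (simp only: act.sum act_sc_monom)
  also have "\<dots> = (\<Sum>m\<in>?F. sc (Poly_Mapping.lookup f m) (subst_monom n b m))
      * (\<Sum>m\<in>?G. sc (Poly_Mapping.lookup g m) (subst_monom n b m))"
    by (simp add: sum_product sc_mult_sc subst_monom_add)
  finally show ?thesis unfolding act_eq_sum_subst_monom .
qed

lemma act_one: "act n b 1 = 1"
proof -
  have "(1 :: 'a::field mpoly) = sc 1 (monom 0)" unfolding monom_def by simp
  then show ?thesis using act_sc_monom[of n b 1 0] by (simp add: subst_monom_def)
qed

lemma act_prod_power: "act n b (\<Prod>j\<in>J. g j ^ e j) = (\<Prod>j\<in>J. act n b (g j) ^ e j)"
proof -
  have "act n b (p ^ k) = act n b p ^ k" for p and k :: nat
    by (induction k) (simp_all add: act_one act_mult)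
  then show ?thesis
    by (induction J rule: infinite_finite_induct) (simp_all add: act_one act_mult)
qed

lemma act_Var:
  assumes "i < n"
  shows "act n b (Var i) = lin_form n b i"
proof -
  have "act n b (Var i) = (\<Prod>j<n. lin_form n b j ^ Poly_Mapping.lookup (Poly_Mapping.single i 1) j)"
    using act_sc_monom[of n b 1 "Poly_Mapping.single i 1"] by (simp add: Var_def subst_monom_def)
  also have "\<dots> = (\<Prod>j<n. if j = i then lin_form n b j else 1)"
    by (rule prod.cong) (auto simp: lookup_single)
  finally show ?thesis using assms by simp
qed

lemma prod_Var_power_eq_monom:
  assumes "in_vars n m"
  shows "(\<Prod>j<n. Var j ^ Poly_Mapping.lookup m j) = (monom m :: 'k::field mpoly)"
proof -
  have Var_power: "Var j ^ e = (monom (Poly_Mapping.single j e) :: 'k mpoly)" for j e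
    by (induction e) (simp_all add: Var_def monom_mult monom_def mult_single flip: single_add)
  have prod_monom: "(\<Prod>j\<in>J. monom (g j)) = (monom (\<Sum>j\<in>J. g j) :: 'k mpoly)" for J g
    by (induction J rule: infinite_finite_induct) (simp_all add: monom_mult, simp_all add: monom_def)
  have "(\<Sum>j<n. Poly_Mapping.single j (Poly_Mapping.lookup m j)) = m"
  proof (rule poly_mapping_eqI)
    fix k
    show "Poly_Mapping.lookup (\<Sum>j<n. Poly_Mapping.single j (Poly_Mapping.lookup m j)) k
        = Poly_Mapping.lookup m k"
      using assms unfolding in_vars_def
      by (cases "k < n") (auto simp: lookup_sum lookup_single when_def in_keys_iff)
  qed
  then show ?thesis
    using prod_monom[of "\<lambda>j. Poly_Mapping.single j (Poly_Mapping.lookup m j)" "{..<n}"]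
    by (simp add: Var_power)
qed

lemma act_act_left_inverse:
  assumes inv: "\<forall>i<n. \<forall>j<n. (\<Sum>k<n. c i k * b k j) = (if i = j then 1 else 0)"
    and f: "\<forall>m\<in>Poly_Mapping.keys f. in_vars n m"
  shows "act n c (act n b f) = (f :: 'k::field mpoly)"
proof -
  interpret act: module_hom sc sc "act n c :: 'k mpoly \<Rightarrow> _" by (rule module_hom_act)
  have act_lin_form: "act n c (lin_form n b j) = Var j" if j: "j < n" for j
  proof -
    have "act n c (lin_form n b j) = (\<Sum>i<n. \<Sum>k<n. sc (c k i * b i j) (Var k))"
      unfolding lin_form_def act.sum act.scale
      by (simp add: act_Var lin_form_def kvs.scale_sum_right kvs.scale_scale mult.commute)
    also have "\<dots> = (\<Sum>k<n. sc (\<Sum>i<n. c k i * b i j) (Var k))"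
      by (subst sum.swap) (simp only: kvs.scale_sum_left)
    also have "\<dots> = (\<Sum>k<n. if k = j then Var j else 0)"
      by (rule sum.cong) (use inv j in auto)
    also have "\<dots> = Var j" using j by simp
    finally show ?thesis .
  qed
  have "act n c (act n b f) = (\<Sum>m\<in>Poly_Mapping.keys f. sc (Poly_Mapping.lookup f m) (act n c (subst_monom n b m)))"
    unfolding act_eq_sum_subst_monom[of n b] act.sum act.scale ..
  also have "\<dots> = (\<Sum>m\<in>Poly_Mapping.keys f. sc (Poly_Mapping.lookup f m) (monom m))"
    using f act_lin_form
    by (intro sum.cong refl) (simp add: subst_monom_def act_prod_power prod_Var_power_eq_monom)
  also have "\<dots> = f" by (rule sum_monoms_eq)
  finally show ?thesis .
qed

lemma Ad_mult:
  assumes "p \<in> Ad n d1" "q \<in> Ad n d2"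
  shows "p * q \<in> Ad n (d1 + d2)"
  unfolding Ad_def
proof (intro CollectI ballI)
  fix k assume "k \<in> Poly_Mapping.keys (p * q)"
  then obtain a b where "k = a + b" "a \<in> Poly_Mapping.keys p" "b \<in> Poly_Mapping.keys q"
    using keys_mult by blast
  moreover have "in_vars n (a + b)"
    using calculation assms keys_add[of a b] unfolding Ad_def is_mon_def in_vars_def by blast
  ultimately show "is_mon n (d1 + d2) k"
    using assms unfolding Ad_def is_mon_def by (auto simp: lookup_add sum.distrib)
qed

lemma prod_power_Ad:
  assumes "finite J" "\<And>j. j \<in> J \<Longrightarrow> (g j :: 'k::field mpoly) \<in> Ad n 1"
  shows "(\<Prod>j\<in>J. g j ^ e j) \<in> Ad n (\<Sum>j\<in>J. e j)"
proof -
  have one: "(1 :: 'k mpoly) \<in> Ad n 0"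
    unfolding Ad_def is_mon_def in_vars_def by simp
  have "p ^ k \<in> Ad n k" if "p \<in> Ad n 1" for p :: "'k mpoly" and k
  proof (induction k)
    case (Suc k)
    show ?case using Ad_mult[OF that Suc.IH] by simp
  qed (use one in simp)
  with assms show ?thesis
    by (induction J rule: finite_induct) (auto intro: one Ad_mult)
qed

lemma lin_form_Ad: "(lin_form n b j :: 'k::field mpoly) \<in> Ad n 1"
proof -
  have "(Var i :: 'k mpoly) \<in> Ad n 1" if "i < n" for i
    using that unfolding Ad_def is_mon_def in_vars_def Var_def monom_def
    by (simp add: lookup_single when_def)
  then show ?thesis
    unfolding lin_form_def
    by (intro kvs.subspace_sum[OF subspace_Ad] kvs.subspace_scale[OF subspace_Ad]) simp
qed

lemma act_Ad: "(f :: 'k::field mpoly) \<in> Ad n d \<Longrightarrow> act n b f \<in> Ad n d"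
  unfolding act_eq_sum_subst_monom
proof (intro kvs.subspace_sum[OF subspace_Ad] kvs.subspace_scale[OF subspace_Ad])
  fix m assume "f \<in> Ad n d" "m \<in> Poly_Mapping.keys f"
  then have "(\<Sum>j<n. Poly_Mapping.lookup m j) = d" unfolding Ad_def is_mon_def by blast
  moreover have "subst_monom n b m \<in> Ad n (\<Sum>j<n. Poly_Mapping.lookup m j)"
    unfolding subst_monom_def by (rule prod_power_Ad[OF finite_lessThan lin_form_Ad])
  ultimately show "subst_monom n b m \<in> Ad n d" by simp
qed

definition weight_ge_space :: "nat \<Rightarrow> (nat \<Rightarrow> int) \<Rightarrow> int \<Rightarrow> 'k::field mpoly set" where
  "weight_ge_space n \<omega> a = {f. \<forall>m\<in>Poly_Mapping.keys f. a \<le> weight n \<omega> m}"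

lemma subspace_weight_ge_space: "ksubspace (weight_ge_space n \<omega> a)"
  unfolding weight_ge_space_def by (rule subspace_keys_in)

lemma weight_ge_space_antimono: "a' \<le> a \<Longrightarrow> weight_ge_space n \<omega> a \<subseteq> weight_ge_space n \<omega> a'"
  unfolding weight_ge_space_def by auto

lemma weight_add: "weight n \<omega> (m + m') = weight n \<omega> m + weight n \<omega> m'"
  unfolding weight_def by (simp add: lookup_add sum.distrib algebra_simps)

lemma weight_ge_space_mult:
  assumes "p \<in> weight_ge_space n \<omega> a1" "q \<in> weight_ge_space n \<omega> a2"
  shows "p * q \<in> weight_ge_space n \<omega> (a1 + a2)"
  unfolding weight_ge_space_def
proof (intro CollectI ballI)
  fix k assume "k \<in> Poly_Mapping.keys (p * q)"
  then obtain a b where "k = a + b" "a \<in> Poly_Mapping.keys p" "b \<in> Poly_Mapping.keys q"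
    using keys_mult by blast
  with assms show "a1 + a2 \<le> weight n \<omega> k"
    unfolding weight_ge_space_def by (auto simp: weight_add intro: add_mono)
qed

lemma prod_power_weight_ge_space:
  assumes "finite J" "\<And>j. j \<in> J \<Longrightarrow> (g j :: 'k::field mpoly) \<in> weight_ge_space n \<omega> (w j)"
  shows "(\<Prod>j\<in>J. g j ^ e j) \<in> weight_ge_space n \<omega> (\<Sum>j\<in>J. w j * int (e j))"
proof -
  have one: "(1 :: 'k mpoly) \<in> weight_ge_space n \<omega> 0"
    unfolding weight_ge_space_def weight_def by simp
  have "p ^ k \<in> weight_ge_space n \<omega> (a * int k)" if "p \<in> weight_ge_space n \<omega> a" for p :: "'k mpoly" and a k
  proof (induction k)
    case (Suc k)
    then have "p * p ^ k \<in> weight_ge_space n \<omega> (a + a * int k)"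
      using that by (intro weight_ge_space_mult)
    then show ?case by (simp add: algebra_simps)
  qed (use one in simp)
  with assms show ?thesis
    by (induction J rule: finite_induct) (auto intro: one weight_ge_space_mult)
qed

lemma antitone_le_of_step:
  assumes "\<forall>i. Suc i < n \<longrightarrow> \<omega> (Suc i) \<le> \<omega> i" "i \<le> j" "j < n"
  shows "\<omega> j \<le> (\<omega> i :: int)"
  using assms(2,3)
proof (induction j rule: dec_induct)
  case (step k)
  then show ?case using assms(1) by (meson Suc_lessD order_trans)
qed simp

lemma lin_form_weight_ge_space:
  assumes tri: "\<forall>i<n. \<forall>j<n. j < i \<longrightarrow> b i j = 0" and \<omega>: "\<forall>i. Suc i < n \<longrightarrow> \<omega> (Suc i) \<le> \<omega> i"
    and j: "j < n"
  shows "(lin_form n b j :: 'k::field mpoly) \<in> weight_ge_space n \<omega> (\<omega> j)"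
  unfolding lin_form_def
proof (intro kvs.subspace_sum[OF subspace_weight_ge_space])
  fix i assume i: "i \<in> {..<n}"
  have "weight n \<omega> (Poly_Mapping.single i 1) = (\<Sum>k<n. if k = i then \<omega> i else 0)"
    unfolding weight_def by (rule sum.cong) (auto simp: lookup_single)
  then have "weight n \<omega> (Poly_Mapping.single i 1) = \<omega> i" using i by simp
  then have Var_i: "(Var i :: 'k mpoly) \<in> weight_ge_space n \<omega> (\<omega> i)"
    unfolding weight_ge_space_def Var_def monom_def by simp
  show "sc (b i j) (Var i) \<in> weight_ge_space n \<omega> (\<omega> j)"
  proof (cases "j < i")
    case True
    then show ?thesis using tri i j kvs.subspace_0[OF subspace_weight_ge_space] by simp
  next
    case False
    then have "\<omega> j \<le> \<omega> i" using antitone_le_of_step[OF \<omega> _ j, of i] by simp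
    then show ?thesis using Var_i weight_ge_space_antimono
      by (blast intro: kvs.subspace_scale[OF subspace_weight_ge_space])
  qed
qed

lemma act_weight_ge_space:
  assumes tri: "\<forall>i<n. \<forall>j<n. j < i \<longrightarrow> b i j = 0" and \<omega>: "\<forall>i. Suc i < n \<longrightarrow> \<omega> (Suc i) \<le> \<omega> i"
    and f: "(f :: 'k::field mpoly) \<in> weight_ge_space n \<omega> a"
  shows "act n b f \<in> weight_ge_space n \<omega> a"
  unfolding act_eq_sum_subst_monom
proof (intro kvs.subspace_sum[OF subspace_weight_ge_space] kvs.subspace_scale[OF subspace_weight_ge_space])
  fix m assume "m \<in> Poly_Mapping.keys f"
  then have "a \<le> weight n \<omega> m" using f unfolding weight_ge_space_def by auto
  moreover have "subst_monom n b m \<in> weight_ge_space n \<omega> (weight n \<omega> m)"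
    unfolding subst_monom_def weight_def
    using prod_power_weight_ge_space[of "{..<n}" "lin_form n b"] lin_form_weight_ge_space[OF tri \<omega>]
    by simp
  ultimately show "subst_monom n b m \<in> weight_ge_space n \<omega> a"
    using weight_ge_space_antimono by blast
qed

section \<open>Homogeneous subspaces\<close>

lemma part_ge_single_weight:
  assumes "\<forall>m1\<in>Poly_Mapping.keys g. \<forall>m2\<in>Poly_Mapping.keys g. weight n \<omega> m1 = weight n \<omega> m2"
  shows "part_ge n \<omega> a g \<in> {g, 0}"
proof (cases "\<exists>m\<in>Poly_Mapping.keys g. a \<le> weight n \<omega> m")
  case True
  then obtain m0 where "m0 \<in> Poly_Mapping.keys g" "a \<le> weight n \<omega> m0" by blast
  with assms have "part_ge n \<omega> a g = g"
    unfolding part_ge_def by (intro restrict_keys_id) fastforce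
  then show ?thesis by simp
qed (auto simp: part_ge_eq_0_iff not_le)

lemma part_ge_image_eq_Int:
  assumes W: "ksubspace W" and hom: "omega_homogeneous n \<omega> W"
  shows "part_ge n \<omega> a ` W = W \<inter> weight_ge_space n \<omega> a"
proof
  interpret part_ge: module_hom sc sc "part_ge n \<omega> a :: 'k::field mpoly \<Rightarrow> _"
    by (rule module_hom_part_ge)
  obtain G where G: "kspan G = W"
    "\<forall>g\<in>G. \<forall>m1\<in>Poly_Mapping.keys g. \<forall>m2\<in>Poly_Mapping.keys g. weight n \<omega> m1 = weight n \<omega> m2"
    using hom unfolding omega_homogeneous_def by blast
  have "part_ge n \<omega> a g \<in> W" if "g \<in> G" for g
  proof -
    have "g \<in> W" unfolding G(1)[symmetric] using that by (rule kvs.span_base)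
    moreover have "part_ge n \<omega> a g \<in> {g, 0}"
      using that G(2) by (intro part_ge_single_weight) blast
    ultimately show ?thesis using kvs.subspace_0[OF W] by auto
  qed
  then have "kspan (part_ge n \<omega> a ` G) \<subseteq> W"
    by (intro kvs.span_minimal W) auto
  then have "part_ge n \<omega> a ` W \<subseteq> W"
    unfolding G(1)[symmetric] part_ge.span_image[symmetric] .
  moreover have "part_ge n \<omega> a ` W \<subseteq> weight_ge_space n \<omega> a"
    unfolding weight_ge_space_def by (auto simp: keys_part_ge)
  ultimately show "part_ge n \<omega> a ` W \<subseteq> W \<inter> weight_ge_space n \<omega> a" by blast
  show "W \<inter> weight_ge_space n \<omega> a \<subseteq> part_ge n \<omega> a ` W"
  proof
    fix x assume x: "x \<in> W \<inter> weight_ge_space n \<omega> a"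
    then have "part_ge n \<omega> a x = x"
      unfolding part_ge_def weight_ge_space_def by (auto intro: restrict_keys_id)
    with x show "x \<in> part_ge n \<omega> a ` W" by (metis IntD1 image_eqI)
  qed
qed

lemma dim_part_ge_le_dim_part_ge_act:
  fixes W :: "'k::field mpoly set"
  assumes W: "ksubspace W" "W \<subseteq> Ad n d" and hom: "omega_homogeneous n \<omega> W"
    and b: "upper_tri_invertible n b" and \<omega>: "\<forall>i. Suc i < n \<longrightarrow> \<omega> (Suc i) \<le> \<omega> i"
  shows "kdim (part_ge n \<omega> a ` W) \<le> kdim (part_ge n \<omega> a ` act n b ` W)"
proof -
  have tri: "\<forall>i<n. \<forall>j<n. j < i \<longrightarrow> b i j = 0"
    using b unfolding upper_tri_invertible_def by blast
  obtain c where inv: "\<forall>i<n. \<forall>j<n. (\<Sum>k<n. c i k * b k j) = (if i = j then 1 else 0)"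
    using b unfolding upper_tri_invertible_def by blast
  define V where "V = W \<inter> weight_ge_space n \<omega> a"
  have V: "ksubspace V"
    unfolding V_def by (intro kvs.subspace_inter W(1) subspace_weight_ge_space)
  have VAd: "V \<subseteq> kspan (mon_basis n d)"
    using W(2) unfolding V_def Ad_eq_span_mon_basis by blast
  have "act n b ` V \<subseteq> part_ge n \<omega> a ` act n b ` W"
  proof
    fix y assume "y \<in> act n b ` V"
    then obtain x where x: "x \<in> V" "y = act n b x" by blast
    then have "y \<in> weight_ge_space n \<omega> a"
      using act_weight_ge_space[OF tri \<omega>] unfolding V_def by blast
    then have "part_ge n \<omega> a y = y"
      unfolding part_ge_def weight_ge_space_def by (auto intro: restrict_keys_id)
    with x show "y \<in> part_ge n \<omega> a ` act n b ` W" unfolding V_def by (metis IntD1 image_eqI)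
  qed
  moreover have "part_ge n \<omega> a ` act n b ` W \<subseteq> kspan (mon_basis n d)"
    using W(2) act_Ad part_ge_Ad unfolding Ad_eq_span_mon_basis[symmetric] by blast
  ultimately have "kdim (act n b ` V) \<le> kdim (part_ge n \<omega> a ` act n b ` W)"
    by (intro kvs.dim_mono_in_finite_span[OF finite_mon_basis])
  moreover have "kdim (act n b ` V) = kdim V"
  proof (rule kvs.dim_image_eq_if_kernel_trivial[OF module_hom_act V finite_mon_basis VAd])
    fix x assume "x \<in> V" "act n b x = 0"
    moreover have "\<forall>m\<in>Poly_Mapping.keys x. in_vars n m"
      using \<open>x \<in> V\<close> W(2) Ad_in_vars unfolding V_def by blast
    ultimately show "x = 0" using act_act_left_inverse[OF inv] by (metis module_hom.zero[OF module_hom_act])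
  qed
  ultimately show ?thesis using part_ge_image_eq_Int[OF W(1) hom] unfolding V_def by simp
qed

theorem proposition3p1:
  fixes n d :: nat and \<omega> :: "nat \<Rightarrow> int" and W :: "'k::field mpoly set"
  assumes "n \<ge> 1" and "d > 0"
    and "ksubspace W" and "W \<subseteq> Ad n d"
    and "\<forall>i. Suc i < n \<longrightarrow> \<omega> (Suc i) \<le> \<omega> i" and "\<omega> (n - 1) \<ge> 0"
  shows "(\<forall>a::int. 0 \<le> a \<and> a \<le> \<omega> 0 * int d \<longrightarrow>
            int (kdim (weight_component n \<omega> a (init_space n \<omega> W)))
              = int (rk (Sset n d \<omega> a) W) - int (rk (Sset n d \<omega> (a + 1)) W))
       \<and> (omega_homogeneous n \<omega> W \<longrightarrow>
            (\<forall>b. upper_tri_invertible n b \<longrightarrow>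
               list_all2 (\<le>) (alpha n d \<omega> W) (alpha n d \<omega> (act n b ` W))))"
proof (intro conjI allI impI)
  fix a :: int
  show "int (kdim (weight_component n \<omega> a (init_space n \<omega> W)))
      = int (rk (Sset n d \<omega> a) W) - int (rk (Sset n d \<omega> (a + 1)) W)"
    using dim_weight_component_init_space[OF assms(3,4), of \<omega> a]
    unfolding rk_Sset_eq_dim_part_ge[OF assms(3,4)] by simp
next
  fix b :: "nat \<Rightarrow> nat \<Rightarrow> 'k"
  assume hom: "omega_homogeneous n \<omega> W" and b: "upper_tri_invertible n b"
  have bW: "ksubspace (act n b ` W)" by (rule module_hom.subspace_image[OF module_hom_act assms(3)])
  have bW_Ad: "act n b ` W \<subseteq> Ad n d" using assms(4) act_Ad by blast
  have "rk (Sset n d \<omega> t) W \<le> rk (Sset n d \<omega> t) (act n b ` W)" for t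
    unfolding rk_Sset_eq_dim_part_ge[OF assms(3,4)] rk_Sset_eq_dim_part_ge[OF bW bW_Ad]
    by (rule dim_part_ge_le_dim_part_ge_act[OF assms(3,4) hom b assms(5)])
  then show "list_all2 (\<le>) (alpha n d \<omega> W) (alpha n d \<omega> (act n b ` W))"
    unfolding alpha_def by (simp add: list_all2_conv_all_nth)
qed

end
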